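(* Let $\mathcal{M}_{(1,1,1)}\subset\mathbb{P}^6\times\mathbb{P}^6$ be the closed subvariety of points $((a_1:\dots:a_7),(b_1:\dots:b_7))$ satisfying $\sum_{m,n=1}^7\varepsilon^{imn}b_ma_n=0$ for $i=1,\dots,7$. Identifying $\mathbb{P}^6$ with the space of lines in $\operatorname{Im}\mathbb{O}_k$ by $(a_1:\dots:a_7)\mapsto[\sum a_io_i]$, one has $$\mathcal{M}_{(1,1,1)}=\{([u],[v])\in\mathbb{P}^6\times\mathbb{P}^6\mid \operatorname{Im}(uv)=0\}.$$
   Context: Let $k$ be a field of characteristic $\ne2$. Label the points of the Fano plane by $1,\dots,7$ so that its directed lines are $123,145,167,246,275,374,365$; for $i,j,l$ put $\varepsilon^{ijl}=1$ if $(i,j,l)$ is a cyclic rotation of a directed line, $-1$ if $(j,i,l)$ is, and $0$ otherwise. $\mathbb{O}_k$ is the unital non-associative algebra with basis $1,o_1,\dots,o_7$ and $o_ro_s=\sum_i\varepsilon^{rsi}o_i-\delta_{rs}$; $\operatorname{Im}\mathbb{O}_k=\operatorname{span}(o_i)$; conjugation fixes $1$ and negates each $o_i$, and $\operatorname{Im}(u)=\tfrac12(u-\bar u)$. (The seven equations are the relations of the quiver with arrows $v_1,\dots,v_7$ from vertex 1 to 2 and $u_1,\dots,u_7$ from 2 to 3, evaluated on a representation of dimension $(1,1,1)$ with $v_n\mapsto a_n$, $u_m\mapsto b_m$.) *)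

theory Defs
  imports Main
begin

definition fano_lines :: "(nat \<times> nat \<times> nat) list" where
  "fano_lines = [(1,2,3),(1,4,5),(1,6,7),(2,4,6),(2,7,5),(3,7,4),(3,6,5)]"

definition cyc_line :: "nat \<Rightarrow> nat \<Rightarrow> nat \<Rightarrow> bool" where
  "cyc_line i j l \<longleftrightarrow> (i,j,l) \<in> set fano_lines \<or> (j,l,i) \<in> set fano_lines \<or> (l,i,j) \<in> set fano_lines"

definition eps :: "nat \<Rightarrow> nat \<Rightarrow> nat \<Rightarrow> int" where
  "eps i j l = (if cyc_line i j l then 1 else if cyc_line j i l then -1 else 0)"

text \<open>Octonions over a field: coordinate functions, index 0 = unit 1, index r = o_r (r=1..7),
  all other coordinates zero.\<close>
type_synonym 'a oct = "nat \<Rightarrow> 'a"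

definition oct_basis :: "nat \<Rightarrow> 'a::field oct" where
  "oct_basis p = (\<lambda>i. if i = p then 1 else 0)"

definition oct_basis_mult :: "nat \<Rightarrow> nat \<Rightarrow> 'a::field oct" where
  "oct_basis_mult p q =
     (if p = 0 then oct_basis q
      else if q = 0 then oct_basis p
      else (\<lambda>i. if i \<in> {1..7} then of_int (eps p q i)
                else if i = 0 then (if p = q then -1 else 0) else 0))"

definition oct_mult :: "'a::field oct \<Rightarrow> 'a oct \<Rightarrow> 'a oct" where
  "oct_mult x y = (\<lambda>i. \<Sum>p\<in>{0..7}. \<Sum>q\<in>{0..7}. x p * y q * oct_basis_mult p q i)"

definition oct_conj :: "'a::field oct \<Rightarrow> 'a oct" where
  "oct_conj x = (\<lambda>i. if i = 0 then x 0 else - x i)"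

definition oct_Im :: "'a::field oct \<Rightarrow> 'a oct" where
  "oct_Im u = (\<lambda>i. (u i - oct_conj u i) / 2)"

definition im_oct :: "(nat \<Rightarrow> 'a::field) \<Rightarrow> 'a oct" where
  "im_oct a = (\<lambda>i. if i \<in> {1..7} then a i else 0)"

end

theory Submission
  imports Defs
begin

text \<open>The seven quiver relations are, up to sign, the seven imaginary coordinates of the
  product of the two imaginary octonions, because \<open>\<epsilon>\<close> is invariant under cyclic rotation
  and antisymmetric in two indices. Since \<open>Im\<close> just kills the real part (char \<open>\<noteq> 2\<close>), the
  relations vanish exactly when \<open>Im(uv) = 0\<close>. The nonvanishing hypotheses on \<open>a\<close> and \<open>b\<close>
  only say that they define points of \<open>\<P>\<^sup>6\<close>; the equivalence holds for all coordinate vectors.\<close>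

lemma cyc_line_rotate: "cyc_line i j l \<longleftrightarrow> cyc_line j l i"
  unfolding cyc_line_def by blast

lemma cyc_line_not_swap: "cyc_line i j l \<Longrightarrow> \<not> cyc_line j i l"
  unfolding cyc_line_def[of i j l] fano_lines_def
  by (simp only: list.set insert_iff empty_iff prod.inject; elim disjE conjE;
      simp add: cyc_line_def fano_lines_def)

lemma eps_rotate: "eps i j l = eps j l i"
  unfolding eps_def using cyc_line_rotate[of i j l] cyc_line_rotate[of l j i] by simp

lemma eps_swap: "eps i j l = - eps j i l"
  unfolding eps_def using cyc_line_not_swap[of i j l] cyc_line_not_swap[of j i l] by auto

lemma eps_swap_first_last: "eps i j l = - eps l j i"
  using eps_rotate[of i j l] eps_swap[of j l i] by simp

lemma oct_mult_coord_gt7: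
  fixes x y :: "'a::field oct"
  assumes "i > 7"
  shows "oct_mult x y i = 0"
  unfolding oct_mult_def using assms
  by (intro sum.neutral ballI) (simp add: oct_basis_mult_def oct_basis_def)

lemma oct_mult_im_oct_coord:
  fixes a b :: "nat \<Rightarrow> 'a::field"
  assumes "i \<in> {1..7}"
  shows "oct_mult (im_oct a) (im_oct b) i =
    (\<Sum>p\<in>{1..7}. \<Sum>q\<in>{1..7}. a p * b q * of_int (eps p q i))"
proof -
  have "{0..7::nat} = insert 0 {1..7}" by auto
  then have "oct_mult (im_oct a) (im_oct b) i =
      (\<Sum>p\<in>{1..7}. \<Sum>q\<in>insert 0 {1..7}. im_oct a p * im_oct b q * oct_basis_mult p q i)"
    by (simp add: oct_mult_def im_oct_def)
  also have "\<dots> = (\<Sum>p\<in>{1..7}. \<Sum>q\<in>{1..7}. a p * b q * of_int (eps p q i))"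
    using assms by (intro sum.cong[OF refl]) (simp add: im_oct_def oct_basis_mult_def)
  finally show ?thesis .
qed

lemma oct_Im_coord:
  fixes x :: "'a::field oct"
  assumes "(2::'a) \<noteq> 0"
  shows "oct_Im x i = (if i = 0 then 0 else x i)"
  using assms by (simp add: oct_Im_def oct_conj_def field_simps)

lemma oct_Im_oct_mult_eq_0_iff:
  fixes x y :: "'a::field oct"
  assumes "(2::'a) \<noteq> 0"
  shows "oct_Im (oct_mult x y) = (\<lambda>_. 0) \<longleftrightarrow> (\<forall>i\<in>{1..7}. oct_mult x y i = 0)"
proof -
  have "oct_Im (oct_mult x y) = (\<lambda>_. 0) \<longleftrightarrow> (\<forall>i. i \<noteq> 0 \<longrightarrow> oct_mult x y i = 0)"
    by (simp add: fun_eq_iff oct_Im_coord[OF assms])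
  also have "\<dots> \<longleftrightarrow> (\<forall>i\<in>{1..7}. oct_mult x y i = 0)"
    using oct_mult_coord_gt7[of _ x y] by (auto simp: not_le)
  finally show ?thesis .
qed

lemma quiver_relation_eq_neg_oct_mult:
  fixes a b :: "nat \<Rightarrow> 'a::field"
  assumes "i \<in> {1..7}"
  shows "(\<Sum>m\<in>{1..7}. \<Sum>n\<in>{1..7}. of_int (eps i m n) * b m * a n) =
    - oct_mult (im_oct a) (im_oct b) i"
proof -
  have "(\<Sum>m\<in>{1..7}. \<Sum>n\<in>{1..7}. of_int (eps i m n) * b m * a n) =
      (\<Sum>m\<in>{1..7::nat}. \<Sum>n\<in>{1..7::nat}. - (a n * b m * of_int (eps n m i)))"
    by (intro sum.cong refl) (simp add: eps_swap_first_last[of i] algebra_simps)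
  also have "\<dots> = - (\<Sum>n\<in>{1..7::nat}. \<Sum>m\<in>{1..7::nat}. a n * b m * of_int (eps n m i))"
    by (subst sum.swap) (simp add: sum_negf)
  finally show ?thesis
    using oct_mult_im_oct_coord[OF assms, of a b] by simp
qed

theorem proposition10p2:
  fixes a b :: "nat \<Rightarrow> 'k::field"
  assumes char: "(2::'k) \<noteq> 0"
    and a_nz: "\<exists>i\<in>{1..7}. a i \<noteq> 0"
    and b_nz: "\<exists>i\<in>{1..7}. b i \<noteq> 0"
  shows "(\<forall>i\<in>{1..7::nat}. (\<Sum>m\<in>{1..7}. \<Sum>n\<in>{1..7}. of_int (eps i m n) * b m * a n) = 0)
     \<longleftrightarrow> oct_Im (oct_mult (im_oct a) (im_oct b)) = (\<lambda>_. 0)"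
proof -
  have "(\<Sum>m\<in>{1..7}. \<Sum>n\<in>{1..7}. of_int (eps i m n) * b m * a n) = 0 \<longleftrightarrow>
      oct_mult (im_oct a) (im_oct b) i = 0" if "i \<in> {1..7}" for i
    unfolding quiver_relation_eq_neg_oct_mult[OF that] by simp
  then show ?thesis
    by (simp add: oct_Im_oct_mult_eq_0_iff[OF char])
qed

end
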